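(* Let $p\ge1$ and let $\Phi$ be a Young function with $\Phi(t)\lesssim t^p$ for $t\ge1$. Suppose that a diffeomorphism $\psi:\mathbb{R}^n\to\mathbb{R}^n$ induces a bounded composition operator $C_\psi$ from $\mathcal{M}_\Phi^p(\mathbb{R}^n)$ to itself. Then there is a constant $C>0$ such that for all $x_0\in\mathbb{R}^n$ and all $f\in\mathcal{M}_\Phi^p(\mathbb{R}^n)$, \[ \|f(D\psi(x_0)\,\cdot)\|_{\mathcal{M}_\Phi^p}\le C\|f\|_{\mathcal{M}_\Phi^p}. \]
   Context: A Young function is a convex $\Phi:[0,\infty)\to[0,\infty)$ with $\Phi(0)=0$, $\lim_{t\to\infty}\Phi(t)=\infty$. $g\lesssim h$ means $g\le Ch$ for a constant $C>0$. For a ball $B$, $\|f\|_{\Phi,B}=\inf\{\lambda>0:\frac1{|B|}\int_B\Phi(|f|/\lambda)\le1\}$. $\mathcal{M}_\Phi^p(\mathbb{R}^n)$ is the set of measurable $f$ with $\|f\|_{\mathcal{M}_\Phi^p}=\sup_{a\in\mathbb{R}^n,r>0}|B(a,r)|^{1/p}\|f\|_{\Phi,B(a,r)}<\infty$. A diffeomorphism is a bijection $\psi$ with $\psi,\psi^{-1}$ differentiable; $D\psi(x_0)$ is its Jacobi matrix at $x_0$; $C_\psi f=f\circ\psi$. *)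

theory Defs
  imports "HOL-Analysis.Analysis"
begin

definition young_function :: "(real \<Rightarrow> real) \<Rightarrow> bool" where
  "young_function \<Phi> \<longleftrightarrow> convex_on {0..} \<Phi> \<and> (\<forall>t\<ge>0. \<Phi> t \<ge> 0) \<and> \<Phi> 0 = 0
     \<and> filterlim \<Phi> at_top at_top"

text \<open>Luxemburg-type average norm on a ball B:
  inf of lambda > 0 with (1/|B|) int_B Phi(|f|/lambda) \<le> 1 (inf of the empty set is top).\<close>
definition orlicz_ball_norm ::
  "(real \<Rightarrow> real) \<Rightarrow> ('a::euclidean_space \<Rightarrow> real) \<Rightarrow> 'a set \<Rightarrow> ennreal" where
  "orlicz_ball_norm \<Phi> f B = Inf {ennreal l | l. l > 0 \<and>
      (\<integral>\<^sup>+ x \<in> B. ennreal (\<Phi> (\<bar>f x\<bar> / l)) \<partial>lebesgue) / ennreal (measure lebesgue B) \<le> 1}"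

definition morrey_orlicz_norm ::
  "(real \<Rightarrow> real) \<Rightarrow> real \<Rightarrow> ('a::euclidean_space \<Rightarrow> real) \<Rightarrow> ennreal" where
  "morrey_orlicz_norm \<Phi> p f = (SUP (a, r) \<in> UNIV \<times> {0<..}.
      ennreal (measure lebesgue (ball a r) powr (1 / p)) * orlicz_ball_norm \<Phi> f (ball a r))"

definition morrey_orlicz_space ::
  "(real \<Rightarrow> real) \<Rightarrow> real \<Rightarrow> ('a::euclidean_space \<Rightarrow> real) set" where
  "morrey_orlicz_space \<Phi> p = {f. f \<in> borel_measurable lebesgue \<and> morrey_orlicz_norm \<Phi> p f < top}"

definition diffeomorphism :: "('a::euclidean_space \<Rightarrow> 'a) \<Rightarrow> bool" where
  "diffeomorphism \<psi> \<longleftrightarrow> bij \<psi> \<and> (\<forall>x. \<psi> differentiable at x) \<and> (\<forall>x. inv \<psi> differentiable at x)"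

definition bounded_composition_morrey_orlicz ::
  "(real \<Rightarrow> real) \<Rightarrow> real \<Rightarrow> ('a::euclidean_space \<Rightarrow> 'a) \<Rightarrow> bool" where
  "bounded_composition_morrey_orlicz \<Phi> p \<psi> \<longleftrightarrow>
     (\<forall>f \<in> morrey_orlicz_space \<Phi> p. f \<circ> \<psi> \<in> morrey_orlicz_space \<Phi> p) \<and>
     (\<exists>C>0. \<forall>f \<in> morrey_orlicz_space \<Phi> p.
        morrey_orlicz_norm \<Phi> p (f \<circ> \<psi>) \<le> ennreal C * morrey_orlicz_norm \<Phi> p f)"

end

theory Submission
  imports Defs
begin

text \<open>Fix \<open>x0\<close>, let \<open>L\<close> be the derivative of \<open>\<psi>\<close> at \<open>x0\<close> and let
  \<open>\<psi>\<^sub>t z = (\<psi> (x0 + t z) - \<psi> x0) / t\<close> be the blow-ups of \<open>\<psi>\<close> at \<open>x0\<close>; they converge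
  pointwise to \<open>L\<close> as \<open>t \<rightarrow> 0\<close>. A dilation by \<open>t\<close> changes Morrey--Orlicz norms by exactly
  the factor \<open>t\<^bsup>n/p\<^esup>\<close>, so conjugating \<open>C\<^sub>\<psi>\<close> by dilations bounds \<open>f \<mapsto> f \<circ> \<psi>\<^sub>t\<close>
  uniformly in \<open>t\<close>, ball by ball: \<open>|B|\<^bsup>1/p\<^esup> \<parallel>f \<circ> \<psi>\<^sub>t\<parallel>\<^bsub>\<Phi>,B\<^esub> \<le> K \<parallel>f\<parallel>\<close>.

  As \<open>f\<close> is merely measurable, \<open>f \<circ> \<psi>\<^sub>t\<close> need not converge to \<open>f \<circ> L\<close>; one passes to the
  limit in the push-forward measures instead. Applied to indicators, together with
  \<open>\<parallel>\<chi>\<^sub>E\<parallel> \<le> c |E|\<^bsup>1/p\<^esup>\<close> (which is where \<open>\<Phi> t \<le> c t\<^sup>p\<close> is used), the uniform bound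
  says that preimages under \<open>\<psi>\<^sub>t\<close> of sets of small measure are uniformly small in \<open>B\<close>.
  With outer regularity this upgrades Fatou's lemma for open sets to
  \<open>|L\<^sup>-\<^sup>1 A \<inter> B| \<le> liminf |\<psi>\<^sub>t\<^sup>-\<^sup>1 A \<inter> B|\<close> for all measurable \<open>A\<close>, hence to the same
  inequality for nonnegative integrands, and the Orlicz norm on \<open>B\<close> is lower semicontinuous
  under it. So the bound passes to \<open>f \<circ> L\<close> with the same constant \<open>K\<close>.\<close>

lemma powr_mult_max_le:
  fixes c p m V :: real
  assumes c: "1 \<le> c" and p: "1 \<le> p" and m: "0 < m" "m \<le> V"
  shows "V powr (1 / p) * max (c * m / V) ((c * m / V) powr (1 / p)) \<le> c * m powr (1 / p)"
proof -
  have V: "0 < V" using m by simp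
  have "V powr (1 / p) * (c * m / V) = c * m * V powr (1 / p - 1)"
    using V by (simp add: powr_diff field_simps)
  also have "\<dots> \<le> c * m * m powr (1 / p - 1)"
    using c m p by (intro mult_left_mono powr_mono2') (auto simp: field_simps)
  also have "\<dots> = c * m powr (1 / p)"
    using m by (simp add: powr_diff field_simps)
  finally have linear: "V powr (1 / p) * (c * m / V) \<le> c * m powr (1 / p)" .
  have "V powr (1 / p) * (c * m / V) powr (1 / p) = c powr (1 / p) * m powr (1 / p)"
    using V c m by (simp add: powr_mult[symmetric])
  also have "\<dots> \<le> c * m powr (1 / p)"
    using c p powr_mono[of "1 / p" 1 c] by (intro mult_right_mono) auto
  finally have root: "V powr (1 / p) * (c * m / V) powr (1 / p) \<le> c * m powr (1 / p)" .
  show ?thesis using linear root by (simp add: max_def)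
qed

lemma ennreal_divide_le_one_iff:
  assumes "0 < m"
  shows "X / ennreal m \<le> 1 \<longleftrightarrow> X \<le> ennreal m"
proof (cases X)
  case (real x)
  then show ?thesis
    using assms by (simp add: divide_ennreal ennreal_le_iff divide_le_eq_1 flip: ennreal_1)
qed (use assms in \<open>simp add: ennreal_top_divide top_unique\<close>)

lemma ennreal_mult_le_iff_le_divide:
  assumes "0 < c"
  shows "ennreal c * x \<le> y \<longleftrightarrow> x \<le> y / ennreal c"
proof -
  have "ennreal c * x \<le> y \<longleftrightarrow> ennreal c * x \<le> ennreal c * (y / ennreal c)"
    using assms by (simp add: ennreal_times_divide mult.commute mult_divide_eq_ennreal)
  also have "\<dots> \<longleftrightarrow> x \<le> y / ennreal c"
    using assms by (simp add: ennreal_mult_le_mult_iff)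
  finally show ?thesis .
qed

lemma ennreal_liminf_add_le:
  fixes a b :: "nat \<Rightarrow> ennreal"
  shows "liminf a + liminf b \<le> liminf (\<lambda>k. a k + b k)"
proof -
  have inc: "incseq (\<lambda>n. INF m\<in>{n..}. a m)" "incseq (\<lambda>n. INF m\<in>{n..}. b m)"
    by (intro monoI INF_superset_mono; auto)+
  have "liminf a + liminf b = (SUP n. (INF m\<in>{n..}. a m) + (INF m\<in>{n..}. b m))"
    unfolding liminf_SUP_INF by (rule ennreal_SUP_add[OF inc, symmetric])
  also have "\<dots> \<le> (SUP n. INF m\<in>{n..}. a m + b m)"
    by (intro SUP_subset_mono[OF order_refl] INF_greatest) (auto intro!: add_mono INF_lower)
  finally show ?thesis by (simp add: liminf_SUP_INF)
qed

lemma ennreal_liminf_cmult_le: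
  fixes a :: "nat \<Rightarrow> ennreal"
  shows "c * liminf a \<le> liminf (\<lambda>k. c * a k)"
proof -
  have "c * liminf a = (SUP n. c * (INF m\<in>{n..}. a m))"
    unfolding liminf_SUP_INF by (rule SUP_mult_left_ennreal)
  also have "\<dots> \<le> (SUP n. INF m\<in>{n..}. c * a m)"
    by (intro SUP_subset_mono[OF order_refl] INF_greatest) (auto intro!: mult_left_mono INF_lower)
  finally show ?thesis by (simp add: liminf_SUP_INF)
qed

lemma measure_lebesgue_ball_pos:
  fixes a :: "'a::euclidean_space"
  shows "0 < r \<Longrightarrow> 0 < measure lebesgue (ball a r)"
  by (metis content_ball_pos measure_completion sets_lborel borel_open open_ball)

lemma emeasure_lebesgue_finite_if_measure_pos:
  "0 < measure lebesgue B \<Longrightarrow> emeasure lebesgue B < \<infinity>"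
  by (metis infinity_ennreal_def measure_zero_top less_irrefl top.not_eq_extremum)

lemma
  fixes c :: "'a::euclidean_space"
  assumes "t \<noteq> 0"
  shows lebesgue_affine_scaleR: "lebesgue = density (distr lebesgue lebesgue (\<lambda>x. c + t *\<^sub>R x)) (\<lambda>_. \<bar>t\<bar> ^ DIM('a))"
    and lebesgue_affine_scaleR_measurable: "(\<lambda>x. c + t *\<^sub>R x) \<in> lebesgue \<rightarrow>\<^sub>M lebesgue"
proof -
  have T: "(\<lambda>x. c + (\<Sum>j\<in>Basis. (t * (x \<bullet> j)) *\<^sub>R j)) = (\<lambda>x. c + t *\<^sub>R x)"
    by (simp flip: scaleR_scaleR scaleR_sum_right add: euclidean_representation)
  show "lebesgue = density (distr lebesgue lebesgue (\<lambda>x. c + t *\<^sub>R x)) (\<lambda>_. \<bar>t\<bar> ^ DIM('a))"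
    using lebesgue_affine_euclidean[of "\<lambda>_. t" c] assms by (simp add: T)
  show "(\<lambda>x. c + t *\<^sub>R x) \<in> lebesgue \<rightarrow>\<^sub>M lebesgue"
    using lebesgue_affine_measurable[of "\<lambda>_. t" c] assms by (simp add: T)
qed

lemma nn_integral_lebesgue_affine:
  fixes c :: "'a::euclidean_space"
  assumes t: "t \<noteq> 0" and F: "F \<in> borel_measurable lebesgue"
  shows "(\<integral>\<^sup>+ x. F x \<partial>lebesgue) = ennreal (\<bar>t\<bar> ^ DIM('a)) * (\<integral>\<^sup>+ z. F (c + t *\<^sub>R z) \<partial>lebesgue)"
  using F lebesgue_affine_scaleR_measurable[OF t, of c]
  by (subst lebesgue_affine_scaleR(1)[OF t, of c])
     (simp add: nn_integral_density nn_integral_distr nn_integral_cmult measurable_distr_eq1)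

lemma affine_mem_ball_iff:
  fixes c :: "'a::real_normed_vector"
  assumes "0 < t"
  shows "c + t *\<^sub>R z \<in> ball (c + t *\<^sub>R a) (t * r) \<longleftrightarrow> z \<in> ball a r"
proof -
  have "dist (c + t *\<^sub>R a) (c + t *\<^sub>R z) = t * dist a z"
    using assms by (simp add: dist_norm flip: scaleR_diff_right)
  then show ?thesis using assms by simp
qed

lemma set_nn_integral_lebesgue_affine_ball:
  fixes c :: "'a::euclidean_space"
  assumes t: "0 < t" and G: "G \<in> borel_measurable lebesgue"
  shows "(\<integral>\<^sup>+ x \<in> ball (c + t *\<^sub>R a) (t * r). G x \<partial>lebesgue)
       = ennreal (t ^ DIM('a)) * (\<integral>\<^sup>+ z \<in> ball a r. G (c + t *\<^sub>R z) \<partial>lebesgue)"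
proof -
  have "(\<integral>\<^sup>+ x \<in> ball (c + t *\<^sub>R a) (t * r). G x \<partial>lebesgue) = ennreal (t ^ DIM('a)) *
      (\<integral>\<^sup>+ z. G (c + t *\<^sub>R z) * indicator (ball (c + t *\<^sub>R a) (t * r)) (c + t *\<^sub>R z) \<partial>lebesgue)"
    using t nn_integral_lebesgue_affine[of t "\<lambda>x. G x * indicator (ball (c + t *\<^sub>R a) (t * r)) x" c]
    by (simp add: G borel_measurable_times_ennreal borel_measurable_indicator fmeasurableD lmeasurable_ball)
  also have "(\<lambda>z. indicator (ball (c + t *\<^sub>R a) (t * r)) (c + t *\<^sub>R z)) = indicator (ball a r)"
    by (intro ext) (simp only: indicator_def affine_mem_ball_iff[OF t])
  finally show ?thesis .
qed

lemma measure_lebesgue_ball_affine: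
  fixes c :: "'a::euclidean_space"
  assumes "0 < t" and "0 \<le> r"
  shows "measure lebesgue (ball (c + t *\<^sub>R a) (t * r)) = t ^ DIM('a) * measure lebesgue (ball a r)"
proof -
  have ball: "measure lebesgue (ball x s) = s ^ DIM('a) * measure lebesgue (ball (0::'a) 1)"
    if "0 \<le> s" for x :: 'a and s
    using content_ball_conv_unit_ball[OF that, of x]
    by (metis measure_completion sets_lborel borel_open open_ball)
  have "measure lebesgue (ball (c + t *\<^sub>R a) (t * r)) = (t * r) ^ DIM('a) * measure lebesgue (ball (0::'a) 1)"
    by (rule ball) (use assms in simp)
  also have "\<dots> = t ^ DIM('a) * (r ^ DIM('a) * measure lebesgue (ball (0::'a) 1))"
    by (simp only: power_mult_distrib mult.assoc)
  also have "r ^ DIM('a) * measure lebesgue (ball (0::'a) 1) = measure lebesgue (ball a r)"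
    by (rule ball[symmetric]) (use assms in simp)
  finally show ?thesis .
qed

section \<open>Young functions\<close>

lemma young_function_nonneg: "young_function \<Phi> \<Longrightarrow> 0 \<le> t \<Longrightarrow> 0 \<le> \<Phi> t"
  by (simp add: young_function_def)

lemma young_function_zero: "young_function \<Phi> \<Longrightarrow> \<Phi> 0 = 0"
  by (simp add: young_function_def)

lemma young_function_scale_le:
  assumes Y: "young_function \<Phi>" and "0 \<le> u" "u \<le> 1" "0 \<le> y"
  shows "\<Phi> (u * y) \<le> u * \<Phi> y"
proof -
  have "convex_on {0..} \<Phi>" using Y by (simp add: young_function_def)
  then have "\<Phi> ((1 - u) * 0 + u * y) \<le> (1 - u) * \<Phi> 0 + u * \<Phi> y"
    using convex_onD[of "{0..}" \<Phi> u 0 y] assms by auto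
  then show ?thesis using young_function_zero[OF Y] by simp
qed

lemma young_function_mono:
  assumes Y: "young_function \<Phi>" and "0 \<le> s" "s \<le> t"
  shows "\<Phi> s \<le> \<Phi> t"
proof (cases "t = 0")
  case False
  then have t: "0 < t" using assms by simp
  have "\<Phi> ((s / t) * t) \<le> (s / t) * \<Phi> t"
    using assms t by (intro young_function_scale_le[OF Y]) auto
  also have "\<dots> \<le> \<Phi> t"
    using assms t young_function_nonneg[OF Y, of t] by (intro mult_left_le_one_le) auto
  finally show ?thesis using t by simp
qed (use assms in simp)

lemma young_function_unbounded:
  assumes "young_function \<Phi>"
  obtains s where "0 < s" "M \<le> \<Phi> s"
proof -
  have "filterlim \<Phi> at_top at_top" using assms by (simp add: young_function_def)
  then obtain s0 where "\<And>s. s0 \<le> s \<Longrightarrow> M \<le> \<Phi> s"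
    by (auto simp: filterlim_at_top eventually_at_top_linorder)
  then show ?thesis using that[of "max s0 1"] by simp
qed

lemma young_function_le_max_power:
  assumes Y: "young_function \<Phi>" and growth: "\<And>t. 1 \<le> t \<Longrightarrow> \<Phi> t \<le> c * t powr p"
    and s: "0 \<le> s"
  shows "\<Phi> s \<le> c * max s (s powr p)"
proof -
  have c: "0 \<le> c" using growth[of 1] young_function_nonneg[OF Y, of 1] by simp
  show ?thesis
  proof (cases "1 \<le> s")
    case True
    then have "\<Phi> s \<le> c * s powr p" by (rule growth)
    also have "\<dots> \<le> c * max s (s powr p)" using c by (intro mult_left_mono) auto
    finally show ?thesis .
  next
    case False
    have "\<Phi> (s * 1) \<le> s * \<Phi> 1"
      using False s by (intro young_function_scale_le[OF Y]) auto
    also have "\<dots> \<le> s * c" using growth[of 1] s by (intro mult_left_mono) auto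
    also have "\<dots> \<le> c * max s (s powr p)" using c by (simp add: mult.commute mult_left_mono)
    finally show ?thesis by simp
  qed
qed

lemma young_function_inverse_max_mult_le:
  assumes Y: "young_function \<Phi>" and growth: "\<And>t. 1 \<le> t \<Longrightarrow> \<Phi> t \<le> c * t powr p"
    and p: "0 < p" and c: "0 < c" and m: "0 < m" and V: "0 < V"
  shows "\<Phi> (1 / max (c * m / V) ((c * m / V) powr (1 / p))) * m \<le> V"
proof -
  define q where "q = c * m / V"
  define l where "l = max q (q powr (1 / p))"
  have q: "0 < q" using c m V by (simp add: q_def)
  have l: "0 < l" "q \<le> l" using q by (auto simp: l_def)
  have "q = (q powr (1 / p)) powr p" using p q by (simp add: powr_powr)
  also have "\<dots> \<le> l powr p" using p q by (intro powr_mono2) (auto simp: l_def)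
  finally have lp: "q \<le> l powr p" .
  have "\<Phi> (1 / l) * m \<le> c * max (1 / l) ((1 / l) powr p) * m"
    using l m by (intro mult_right_mono young_function_le_max_power[OF Y growth]) auto
  also have "\<dots> = max (c * m / l) (c * m / l powr p)"
    using c m l by (simp add: powr_divide max_mult_distrib_right max_mult_distrib_left)
  also have "\<dots> \<le> c * m / q"
    using c m q l lp by (intro max.boundedI divide_left_mono) auto
  also have "\<dots> = V" using c m V by (simp add: q_def)
  finally show ?thesis by (simp add: l_def q_def)
qed

lemma borel_measurable_young_function_comp:
  assumes Y: "young_function \<Phi>" and f: "f \<in> borel_measurable M" and l: "0 < l"
  shows "(\<lambda>x. \<Phi> (\<bar>f x\<bar> / l)) \<in> borel_measurable M"
proof -
  \<comment> \<open>monotone functions are Borel, but \<open>\<Phi>\<close> is monotone only on \<open>[0, \<infinity>)\<close>\<close>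
  define \<Phi>' where "\<Phi>' s = \<Phi> (max s 0)" for s
  have "mono \<Phi>'"
    unfolding \<Phi>'_def by (intro monoI young_function_mono[OF Y]) auto
  then have "\<Phi>' \<in> borel_measurable borel"
    by (rule borel_measurable_mono)
  then have "(\<lambda>x. \<Phi>' (\<bar>f x\<bar> / l)) \<in> borel_measurable M"
    using f by measurable
  then show ?thesis using l by (simp add: \<Phi>'_def)
qed

section \<open>Orlicz norms on balls and Morrey--Orlicz norms\<close>

lemma orlicz_ball_norm_leI:
  assumes "0 < l" and "0 < measure lebesgue B"
    and "(\<integral>\<^sup>+ x \<in> B. ennreal (\<Phi> (\<bar>g x\<bar> / l)) \<partial>lebesgue) \<le> measure lebesgue B"
  shows "orlicz_ball_norm \<Phi> g B \<le> ennreal l"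
  unfolding orlicz_ball_norm_def
  using assms by (intro Inf_lower) (auto simp: ennreal_divide_le_one_iff)

lemma orlicz_ball_norm_lessD:
  assumes Y: "young_function \<Phi>" and B: "0 < measure lebesgue B"
    and less: "orlicz_ball_norm \<Phi> g B < ennreal l"
  shows "(\<integral>\<^sup>+ x \<in> B. ennreal (\<Phi> (\<bar>g x\<bar> / l)) \<partial>lebesgue) \<le> measure lebesgue B"
proof -
  from less obtain l' where l': "0 < l'" "l' < l"
    and avg: "(\<integral>\<^sup>+ x \<in> B. ennreal (\<Phi> (\<bar>g x\<bar> / l')) \<partial>lebesgue) \<le> measure lebesgue B"
    unfolding orlicz_ball_norm_def Inf_less_iff
    by (auto simp: ennreal_divide_le_one_iff[OF B] ennreal_less_iff)
  have "\<Phi> (\<bar>g x\<bar> / l) \<le> \<Phi> (\<bar>g x\<bar> / l')" for x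
    using l' by (intro young_function_mono[OF Y] divide_left_mono) auto
  then have "(\<integral>\<^sup>+ x \<in> B. ennreal (\<Phi> (\<bar>g x\<bar> / l)) \<partial>lebesgue)
      \<le> (\<integral>\<^sup>+ x \<in> B. ennreal (\<Phi> (\<bar>g x\<bar> / l')) \<partial>lebesgue)"
    by (intro nn_integral_mono mult_right_mono ennreal_leI) auto
  with avg show ?thesis by order
qed

lemma morrey_orlicz_norm_upper:
  "0 < r \<Longrightarrow> ennreal (measure lebesgue (ball a r) powr (1 / p)) * orlicz_ball_norm \<Phi> f (ball a r)
     \<le> morrey_orlicz_norm \<Phi> p f"
  unfolding morrey_orlicz_norm_def by (rule SUP_upper2[where i="(a, r)"]) auto

lemma morrey_orlicz_norm_least:
  assumes "\<And>a r. 0 < r \<Longrightarrow>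
    ennreal (measure lebesgue (ball a r) powr (1 / p)) * orlicz_ball_norm \<Phi> f (ball a r) \<le> M"
  shows "morrey_orlicz_norm \<Phi> p f \<le> M"
  unfolding morrey_orlicz_norm_def using assms by (auto intro: SUP_least)

lemma orlicz_ball_norm_affine:
  fixes c :: "'a::euclidean_space"
  assumes Y: "young_function \<Phi>" and t: "0 < t" and r: "0 < r" and g: "g \<in> borel_measurable lebesgue"
  shows "orlicz_ball_norm \<Phi> g (ball (c + t *\<^sub>R a) (t * r))
       = orlicz_ball_norm \<Phi> (\<lambda>z. g (c + t *\<^sub>R z)) (ball a r)"
proof -
  have avg: "(\<integral>\<^sup>+ x \<in> ball (c + t *\<^sub>R a) (t * r). ennreal (\<Phi> (\<bar>g x\<bar> / l)) \<partial>lebesgue)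
        / ennreal (measure lebesgue (ball (c + t *\<^sub>R a) (t * r)))
      = (\<integral>\<^sup>+ z \<in> ball a r. ennreal (\<Phi> (\<bar>g (c + t *\<^sub>R z)\<bar> / l)) \<partial>lebesgue)
        / ennreal (measure lebesgue (ball a r))" if l: "0 < l" for l
  proof -
    have meas: "(\<lambda>x. ennreal (\<Phi> (\<bar>g x\<bar> / l))) \<in> borel_measurable lebesgue"
      using borel_measurable_young_function_comp[OF Y g l] by measurable
    have int: "(\<integral>\<^sup>+ x \<in> ball (c + t *\<^sub>R a) (t * r). ennreal (\<Phi> (\<bar>g x\<bar> / l)) \<partial>lebesgue)
        = (\<integral>\<^sup>+ z \<in> ball a r. ennreal (\<Phi> (\<bar>g (c + t *\<^sub>R z)\<bar> / l)) \<partial>lebesgue) * ennreal (t ^ DIM('a))"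
      using set_nn_integral_lebesgue_affine_ball[OF t meas, of c a r] by (simp only: mult.commute)
    have "measure lebesgue (ball (c + t *\<^sub>R a) (t * r)) = measure lebesgue (ball a r) * t ^ DIM('a)"
      using measure_lebesgue_ball_affine[OF t less_imp_le[OF r]] by (simp only: mult.commute)
    then have vol: "ennreal (measure lebesgue (ball (c + t *\<^sub>R a) (t * r)))
        = ennreal (measure lebesgue (ball a r)) * ennreal (t ^ DIM('a))"
      using t by (simp only: ennreal_mult' measure_nonneg)
    show ?thesis
      unfolding int vol using t by (intro divide_mult_eq) auto
  qed
  then have "(0 < l \<and> (\<integral>\<^sup>+ x \<in> ball (c + t *\<^sub>R a) (t * r). ennreal (\<Phi> (\<bar>g x\<bar> / l)) \<partial>lebesgue)
        / ennreal (measure lebesgue (ball (c + t *\<^sub>R a) (t * r))) \<le> 1)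
      \<longleftrightarrow> (0 < l \<and> (\<integral>\<^sup>+ z \<in> ball a r. ennreal (\<Phi> (\<bar>g (c + t *\<^sub>R z)\<bar> / l)) \<partial>lebesgue)
        / ennreal (measure lebesgue (ball a r)) \<le> 1)" for l
  proof (cases "0 < l")
    case True
    then show ?thesis by (simp only: avg[OF True])
  qed simp
  then show ?thesis
    unfolding orlicz_ball_norm_def by (simp only:)
qed

lemma morrey_ball_term_affine:
  fixes c :: "'a::euclidean_space"
  assumes Y: "young_function \<Phi>" and t: "0 < t" and r: "0 < r" and g: "g \<in> borel_measurable lebesgue"
  shows "ennreal (measure lebesgue (ball (c + t *\<^sub>R a) (t * r)) powr (1 / p))
           * orlicz_ball_norm \<Phi> g (ball (c + t *\<^sub>R a) (t * r))
       = ennreal ((t ^ DIM('a)) powr (1 / p))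
           * (ennreal (measure lebesgue (ball a r) powr (1 / p))
              * orlicz_ball_norm \<Phi> (\<lambda>z. g (c + t *\<^sub>R z)) (ball a r))"
proof -
  have "measure lebesgue (ball (c + t *\<^sub>R a) (t * r)) powr (1 / p)
      = (t ^ DIM('a)) powr (1 / p) * measure lebesgue (ball a r) powr (1 / p)"
    using t r by (simp only: measure_lebesgue_ball_affine less_imp_le powr_mult zero_le_power measure_nonneg)
  then show ?thesis
    by (simp only: orlicz_ball_norm_affine[OF Y t r g] ennreal_mult'' powr_ge_zero mult.assoc)
qed

lemma morrey_orlicz_norm_le_affine:
  fixes c :: "'a::euclidean_space"
  assumes Y: "young_function \<Phi>" and t: "0 < t" and g: "g \<in> borel_measurable lebesgue"
  shows "morrey_orlicz_norm \<Phi> p g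
       \<le> ennreal ((t ^ DIM('a)) powr (1 / p)) * morrey_orlicz_norm \<Phi> p (\<lambda>z. g (c + t *\<^sub>R z))"
proof (rule morrey_orlicz_norm_least)
  fix a' :: 'a and r' :: real
  assume r': "0 < r'"
  define a r where "a = (1 / t) *\<^sub>R (a' - c)" and "r = r' / t"
  have r: "0 < r" using r' t by (simp add: r_def)
  have "ball a' r' = ball (c + t *\<^sub>R a) (t * r)"
    using t by (simp add: a_def r_def)
  then show "ennreal (measure lebesgue (ball a' r') powr (1 / p)) * orlicz_ball_norm \<Phi> g (ball a' r')
      \<le> ennreal ((t ^ DIM('a)) powr (1 / p)) * morrey_orlicz_norm \<Phi> p (\<lambda>z. g (c + t *\<^sub>R z))"
    using r by (simp only: morrey_ball_term_affine[OF Y t r g])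
      (intro mult_left_mono morrey_orlicz_norm_upper, auto)
qed

lemma set_nn_integral_young_indicator:
  assumes Y: "young_function \<Phi>" and l: "0 \<le> l" and E: "E \<in> sets lebesgue" and B: "B \<in> sets lebesgue"
    and V: "0 < measure lebesgue B"
  shows "(\<integral>\<^sup>+ x \<in> B. ennreal (\<Phi> (\<bar>indicator E x\<bar> / l)) \<partial>lebesgue)
       = ennreal (\<Phi> (1 / l) * measure lebesgue (E \<inter> B))"
proof -
  have "emeasure lebesgue (E \<inter> B) \<le> emeasure lebesgue B"
    using E B by (intro emeasure_mono) auto
  then have "emeasure lebesgue (E \<inter> B) = ennreal (measure lebesgue (E \<inter> B))"
    using emeasure_lebesgue_finite_if_measure_pos[OF V] by (intro emeasure_eq_ennreal_measure) auto
  moreover have "(\<lambda>x. ennreal (\<Phi> (\<bar>indicator E x\<bar> / l)) * indicator B x)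
      = (\<lambda>x. ennreal (\<Phi> (1 / l)) * indicator (E \<inter> B) x)"
    by (auto simp: indicator_def young_function_zero[OF Y])
  ultimately show ?thesis
    using E B l young_function_nonneg[OF Y, of "1 / l"]
    by (simp add: nn_integral_cmult_indicator ennreal_mult)
qed

lemma orlicz_ball_norm_indicator_le:
  assumes Y: "young_function \<Phi>" and l: "0 < l" and E: "E \<in> sets lebesgue" and B: "B \<in> sets lebesgue"
    and V: "0 < measure lebesgue B" and le: "\<Phi> (1 / l) * measure lebesgue (E \<inter> B) \<le> measure lebesgue B"
  shows "orlicz_ball_norm \<Phi> (indicator E) B \<le> ennreal l"
  using le l
  by (intro orlicz_ball_norm_leI[OF l V])
     (simp only: set_nn_integral_young_indicator[OF Y _ E B V] less_imp_le ennreal_leI)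

lemma orlicz_ball_norm_indicator_lessD:
  assumes Y: "young_function \<Phi>" and E: "E \<in> sets lebesgue" and B: "B \<in> sets lebesgue"
    and V: "0 < measure lebesgue B" and less: "orlicz_ball_norm \<Phi> (indicator E) B < ennreal l"
  shows "\<Phi> (1 / l) * measure lebesgue (E \<inter> B) \<le> measure lebesgue B"
proof -
  have l: "0 < l"
    using less by (metis ennreal_less_zero_iff le_less_trans zero_le)
  have "ennreal (\<Phi> (1 / l) * measure lebesgue (E \<inter> B)) \<le> ennreal (measure lebesgue B)"
    using orlicz_ball_norm_lessD[OF Y V less]
    unfolding set_nn_integral_young_indicator[OF Y less_imp_le[OF l] E B V] .
  then show ?thesis by (simp add: ennreal_le_iff)
qed

lemma orlicz_ball_norm_indicator_bound:
  assumes p: "1 \<le> p" and Y: "young_function \<Phi>" and c: "1 \<le> c"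
    and growth: "\<And>t. 1 \<le> t \<Longrightarrow> \<Phi> t \<le> c * t powr p"
    and E: "E \<in> sets lebesgue" and B: "B \<in> sets lebesgue" and V: "0 < measure lebesgue B"
  shows "ennreal (measure lebesgue B powr (1 / p)) * orlicz_ball_norm \<Phi> (indicator E) B
      \<le> ennreal (c * measure lebesgue (E \<inter> B) powr (1 / p))"
proof -
  define m where "m = measure lebesgue (E \<inter> B)"
  have "B \<in> lmeasurable"
    using B emeasure_lebesgue_finite_if_measure_pos[OF V] by (simp add: fmeasurable_def)
  then have mV: "m \<le> measure lebesgue B"
    unfolding m_def using E by (intro measure_mono_fmeasurable) auto
  show ?thesis
  proof (cases "m = 0")
    case True
    have "orlicz_ball_norm \<Phi> (indicator E) B \<le> 0 + ennreal l" if "0 < l" for l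
      using orlicz_ball_norm_indicator_le[OF Y that E B V] V True by (simp add: m_def)
    then have "orlicz_ball_norm \<Phi> (indicator E) B = 0"
      using ennreal_le_epsilon le_zero_eq by blast
    then show ?thesis by simp
  next
    case False
    then have m: "0 < m" using measure_nonneg[of lebesgue] by (simp add: m_def order_less_le)
    \<comment> \<open>a level that works in both regimes \<open>\<Phi> s \<le> c s\<close> (\<open>s \<le> 1\<close>) and \<open>\<Phi> s \<le> c s\<^sup>p\<close> (\<open>s \<ge> 1\<close>)\<close>
    define l where "l = max (c * m / measure lebesgue B) ((c * m / measure lebesgue B) powr (1 / p))"
    have "0 < c * m / measure lebesgue B" using c m V by simp
    then have l: "0 < l" by (simp add: l_def less_max_iff_disj)
    have "orlicz_ball_norm \<Phi> (indicator E) B \<le> ennreal l"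
      using young_function_inverse_max_mult_le[OF Y growth _ _ m V] p c
      by (intro orlicz_ball_norm_indicator_le[OF Y l E B V]) (auto simp: m_def l_def)
    then have "ennreal (measure lebesgue B powr (1 / p)) * orlicz_ball_norm \<Phi> (indicator E) B
        \<le> ennreal (measure lebesgue B powr (1 / p) * l)"
      using l by (simp add: ennreal_mult mult_left_mono)
    also have "\<dots> \<le> ennreal (c * m powr (1 / p))"
      using powr_mult_max_le[OF c p m mV] unfolding l_def by (rule ennreal_leI)
    finally show ?thesis by (simp add: m_def)
  qed
qed

lemma morrey_orlicz_norm_indicator_le:
  fixes E :: "'a::euclidean_space set"
  assumes p: "1 \<le> p" and Y: "young_function \<Phi>" and c: "1 \<le> c"
    and growth: "\<And>t. 1 \<le> t \<Longrightarrow> \<Phi> t \<le> c * t powr p"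
    and E: "E \<in> sets lebesgue" and fin: "emeasure lebesgue E < \<infinity>"
  shows "morrey_orlicz_norm \<Phi> p (indicator E) \<le> ennreal (c * measure lebesgue E powr (1 / p))"
proof (rule morrey_orlicz_norm_least)
  fix a :: 'a and r :: real
  assume r: "0 < r"
  have "E \<in> lmeasurable" using E fin by (simp add: fmeasurable_def)
  then have "measure lebesgue (E \<inter> ball a r) \<le> measure lebesgue E"
    using E by (intro measure_mono_fmeasurable) auto
  then have mono: "ennreal (c * measure lebesgue (E \<inter> ball a r) powr (1 / p))
      \<le> ennreal (c * measure lebesgue E powr (1 / p))"
    using c p by (intro ennreal_leI mult_left_mono powr_mono2) auto
  have "ennreal (measure lebesgue (ball a r) powr (1 / p)) * orlicz_ball_norm \<Phi> (indicator E) (ball a r)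
      \<le> ennreal (c * measure lebesgue (E \<inter> ball a r) powr (1 / p))"
    by (rule orlicz_ball_norm_indicator_bound[OF p Y c _ E _ measure_lebesgue_ball_pos[OF r]])
      (simp_all add: growth)
  also note mono
  finally show "ennreal (measure lebesgue (ball a r) powr (1 / p)) * orlicz_ball_norm \<Phi> (indicator E) (ball a r)
      \<le> ennreal (c * measure lebesgue E powr (1 / p))" .
qed

section \<open>Integrals along pointwise convergent maps\<close>

lemma nn_integral_le_liminf_if_emeasure_le_liminf:
  fixes \<mu> :: "nat \<Rightarrow> 'a measure"
  assumes sets: "\<And>k. sets (\<mu> k) = sets \<nu>"
    and le: "\<And>A. A \<in> sets \<nu> \<Longrightarrow> emeasure \<nu> A \<le> liminf (\<lambda>k. emeasure (\<mu> k) A)"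
    and G: "G \<in> borel_measurable \<nu>"
  shows "integral\<^sup>N \<nu> G \<le> liminf (\<lambda>k. integral\<^sup>N (\<mu> k) G)"
  using G
proof (induction rule: borel_measurable_induct)
  case (cong f g)
  have "\<And>k. integral\<^sup>N (\<mu> k) f = integral\<^sup>N (\<mu> k) g"
    using cong(3) sets_eq_imp_space_eq[OF sets] by (intro nn_integral_cong) auto
  then show ?case using cong(3,4) by (simp cong: nn_integral_cong)
next
  case (set A)
  then show ?case using le[OF set] sets by simp
next
  case (mult u c)
  have u: "u \<in> borel_measurable (\<mu> k)" for k
    using mult.hyps(2) by (simp add: measurable_cong_sets[OF sets refl])
  have "integral\<^sup>N \<nu> (\<lambda>x. c * u x) = c * integral\<^sup>N \<nu> u"
    using mult.hyps(2) by (rule nn_integral_cmult)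
  also have "\<dots> \<le> liminf (\<lambda>k. c * integral\<^sup>N (\<mu> k) u)"
    using mult.IH by (intro order.trans[OF mult_left_mono ennreal_liminf_cmult_le]) auto
  finally show ?case by (simp add: nn_integral_cmult[OF u])
next
  case (add u v)
  have uv: "u \<in> borel_measurable (\<mu> k)" "v \<in> borel_measurable (\<mu> k)" for k
    using add.hyps(1,3) by (simp_all add: measurable_cong_sets[OF sets refl])
  have "integral\<^sup>N \<nu> (\<lambda>x. v x + u x) = integral\<^sup>N \<nu> v + integral\<^sup>N \<nu> u"
    by (rule nn_integral_add[OF add.hyps(3,1)])
  also have "\<dots> \<le> liminf (\<lambda>k. integral\<^sup>N (\<mu> k) v + integral\<^sup>N (\<mu> k) u)"
    using add.IH by (intro order.trans[OF add_mono ennreal_liminf_add_le])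
  finally show ?case by (simp add: nn_integral_add[OF uv(2) uv(1)])
next
  case (seq U)
  have U: "U i \<in> borel_measurable (\<mu> k)" for i k
    using seq.hyps(1) by (simp add: measurable_cong_sets[OF sets refl])
  have "integral\<^sup>N \<nu> (SUP i. U i) = (SUP i. integral\<^sup>N \<nu> (U i))"
    using nn_integral_monotone_convergence_SUP[OF seq.hyps(3,1)] by (simp add: SUP_apply[abs_def])
  also have "\<dots> \<le> (SUP i. liminf (\<lambda>k. integral\<^sup>N (\<mu> k) (U i)))"
    using seq.IH by (intro SUP_mono) blast
  also have "\<dots> \<le> liminf (\<lambda>k. integral\<^sup>N (\<mu> k) (SUP i. U i))"
    by (intro SUP_least Liminf_mono always_eventually allI nn_integral_mono) (auto intro: SUP_upper)
  finally show ?case .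
qed

lemma nn_integral_comp_le_liminf:
  assumes L: "L \<in> M \<rightarrow>\<^sub>M N" and \<phi>: "\<And>k. \<phi> k \<in> M \<rightarrow>\<^sub>M N"
    and le: "\<And>A. A \<in> sets N \<Longrightarrow>
      emeasure M (L -` A \<inter> space M) \<le> liminf (\<lambda>k. emeasure M (\<phi> k -` A \<inter> space M))"
    and G: "G \<in> borel_measurable N"
  shows "(\<integral>\<^sup>+ x. G (L x) \<partial>M) \<le> liminf (\<lambda>k. \<integral>\<^sup>+ x. G (\<phi> k x) \<partial>M)"
  using nn_integral_le_liminf_if_emeasure_le_liminf[of "\<lambda>k. distr M N (\<phi> k)" "distr M N L" G] L \<phi> le G
  by (simp add: emeasure_distr nn_integral_distr)

lemma emeasure_vimage_open_le_liminf:
  fixes L :: "'a \<Rightarrow> 'b::euclidean_space"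
  assumes L: "L \<in> M \<rightarrow>\<^sub>M lebesgue" and \<phi>: "\<And>k. \<phi> k \<in> M \<rightarrow>\<^sub>M lebesgue"
    and conv: "\<And>x. x \<in> space M \<Longrightarrow> (\<lambda>k. \<phi> k x) \<longlonglongrightarrow> L x"
    and U: "open U"
  shows "emeasure M (L -` U \<inter> space M) \<le> liminf (\<lambda>k. emeasure M (\<phi> k -` U \<inter> space M))"
proof -
  have sets: "L -` U \<inter> space M \<in> sets M" "\<phi> k -` U \<inter> space M \<in> sets M" for k
    using U by (auto intro: measurable_sets L \<phi>)
  have "indicator (L -` U \<inter> space M) x \<le> liminf (\<lambda>k. indicator (\<phi> k -` U \<inter> space M) x :: ennreal)" for x
  proof (cases "x \<in> L -` U \<inter> space M")
    case True
    then have "eventually (\<lambda>k. \<phi> k x \<in> U) sequentially"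
      using topological_tendstoD[OF conv U] by auto
    then have "eventually (\<lambda>k. 1 \<le> (indicator (\<phi> k -` U \<inter> space M) x :: ennreal)) sequentially"
      by eventually_elim (use True in auto)
    then show ?thesis using True by (simp add: Liminf_bounded)
  qed simp
  then have "emeasure M (L -` U \<inter> space M)
      \<le> (\<integral>\<^sup>+ x. liminf (\<lambda>k. indicator (\<phi> k -` U \<inter> space M) x) \<partial>M)"
    using sets by (simp add: nn_integral_mono flip: nn_integral_indicator)
  also have "\<dots> \<le> liminf (\<lambda>k. emeasure M (\<phi> k -` U \<inter> space M))"
    using nn_integral_liminf[of "\<lambda>k. indicator (\<phi> k -` U \<inter> space M)" M] sets by simp
  finally show ?thesis .
qed

lemma emeasure_vimage_le_liminf:
  fixes L :: "'a \<Rightarrow> 'b::euclidean_space"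
  assumes L: "L \<in> M \<rightarrow>\<^sub>M lebesgue" and \<phi>: "\<And>k. \<phi> k \<in> M \<rightarrow>\<^sub>M lebesgue"
    and conv: "\<And>x. x \<in> space M \<Longrightarrow> (\<lambda>k. \<phi> k x) \<longlonglongrightarrow> L x"
    and small: "\<And>e. 0 < e \<Longrightarrow> \<exists>d>0. \<forall>E\<in>sets lebesgue. emeasure lebesgue E < ennreal d \<longrightarrow>
      (\<forall>k. emeasure M (\<phi> k -` E \<inter> space M) \<le> ennreal e)"
    and A: "A \<in> sets lebesgue"
  shows "emeasure M (L -` A \<inter> space M) \<le> liminf (\<lambda>k. emeasure M (\<phi> k -` A \<inter> space M))"
proof (rule ennreal_le_epsilon)
  fix e :: real
  assume e: "0 < e"
  obtain d where d: "0 < d" and small_d: "\<And>E k. E \<in> sets lebesgue \<Longrightarrow> emeasure lebesgue E < ennreal d \<Longrightarrow>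
      emeasure M (\<phi> k -` E \<inter> space M) \<le> ennreal e"
    using small[OF e] by blast
  obtain U where U: "open U" "A \<subseteq> U" "U - A \<in> lmeasurable" "emeasure lebesgue (U - A) < ennreal d"
    using sets_lebesgue_outer_open[OF A d] by blast
  have UA: "U - A \<in> sets lebesgue" using U(3) by (simp add: fmeasurableD)
  have "emeasure M (\<phi> k -` U \<inter> space M) \<le> emeasure M (\<phi> k -` A \<inter> space M) + ennreal e" for k
  proof -
    have "emeasure M (\<phi> k -` U \<inter> space M)
        \<le> emeasure M ((\<phi> k -` A \<inter> space M) \<union> (\<phi> k -` (U - A) \<inter> space M))"
      using A UA by (intro emeasure_mono) (auto intro: measurable_sets \<phi>)
    also have "\<dots> \<le> emeasure M (\<phi> k -` A \<inter> space M) + emeasure M (\<phi> k -` (U - A) \<inter> space M)"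
      using A UA by (intro emeasure_subadditive) (auto intro: measurable_sets \<phi>)
    also have "\<dots> \<le> emeasure M (\<phi> k -` A \<inter> space M) + ennreal e"
      using small_d[OF UA U(4)] by (rule add_left_mono)
    finally show ?thesis .
  qed
  then have "liminf (\<lambda>k. emeasure M (\<phi> k -` U \<inter> space M))
      \<le> liminf (\<lambda>k. emeasure M (\<phi> k -` A \<inter> space M)) + ennreal e"
    by (intro order.trans[OF Liminf_mono Liminf_add_const[THEN eq_refl]] always_eventually allI) auto
  moreover have "emeasure M (L -` A \<inter> space M) \<le> emeasure M (L -` U \<inter> space M)"
    using U(1,2) by (intro emeasure_mono) (auto intro: measurable_sets L)
  moreover have "emeasure M (L -` U \<inter> space M) \<le> liminf (\<lambda>k. emeasure M (\<phi> k -` U \<inter> space M))"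
    by (rule emeasure_vimage_open_le_liminf[OF L \<phi> _ U(1)]) (rule conv)
  ultimately show "emeasure M (L -` A \<inter> space M)
      \<le> liminf (\<lambda>k. emeasure M (\<phi> k -` A \<inter> space M)) + ennreal e"
    by order
qed

lemma set_nn_integral_comp_le_liminf:
  fixes L :: "'a::euclidean_space \<Rightarrow> 'b::euclidean_space"
  assumes L: "L \<in> lebesgue \<rightarrow>\<^sub>M lebesgue" and \<phi>: "\<And>k. \<phi> k \<in> lebesgue \<rightarrow>\<^sub>M lebesgue"
    and B: "B \<in> sets lebesgue" and conv: "\<And>x. x \<in> B \<Longrightarrow> (\<lambda>k. \<phi> k x) \<longlonglongrightarrow> L x"
    and small: "\<And>e. 0 < e \<Longrightarrow> \<exists>d>0. \<forall>E\<in>sets lebesgue. emeasure lebesgue E < ennreal d \<longrightarrow>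
      (\<forall>k. emeasure lebesgue (\<phi> k -` E \<inter> B) \<le> ennreal e)"
    and G: "G \<in> borel_measurable lebesgue"
  shows "(\<integral>\<^sup>+ x \<in> B. G (L x) \<partial>lebesgue) \<le> liminf (\<lambda>k. \<integral>\<^sup>+ x \<in> B. G (\<phi> k x) \<partial>lebesgue)"
proof -
  let ?M = "restrict_space lebesgue B"
  have space: "space ?M = B" by (simp add: space_restrict_space)
  have meas: "f \<in> ?M \<rightarrow>\<^sub>M lebesgue" if "f \<in> lebesgue \<rightarrow>\<^sub>M lebesgue" for f :: "'a \<Rightarrow> 'b"
    using that by (rule measurable_restrict_space1)
  have em: "emeasure ?M (f -` E \<inter> B) = emeasure lebesgue (f -` E \<inter> B)" for f :: "'a \<Rightarrow> 'b" and E
    using B by (simp add: emeasure_restrict_space)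
  have int: "(\<integral>\<^sup>+ x \<in> B. H x \<partial>lebesgue) = (\<integral>\<^sup>+ x. H x \<partial>?M)" for H
    using B by (simp add: nn_integral_restrict_space)
  have le: "A \<in> sets lebesgue \<Longrightarrow>
      emeasure ?M (L -` A \<inter> space ?M) \<le> liminf (\<lambda>k. emeasure ?M (\<phi> k -` A \<inter> space ?M))" for A
  proof (intro emeasure_vimage_le_liminf meas L \<phi>)
    fix e :: real
    assume "0 < e"
    then obtain d where "0 < d" "\<forall>E\<in>sets lebesgue. emeasure lebesgue E < ennreal d \<longrightarrow>
        (\<forall>k. emeasure lebesgue (\<phi> k -` E \<inter> B) \<le> ennreal e)"
      using small by blast
    then show "\<exists>d>0. \<forall>E\<in>sets lebesgue. emeasure lebesgue E < ennreal d \<longrightarrow>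
        (\<forall>k. emeasure ?M (\<phi> k -` E \<inter> space ?M) \<le> ennreal e)"
      unfolding space em by blast
  qed (auto simp: space conv)
  show ?thesis
    unfolding int by (rule nn_integral_comp_le_liminf[OF meas[OF L] meas[OF \<phi>] le G])
qed

lemma orlicz_ball_norm_comp_le_if_liminf:
  assumes Y: "young_function \<Phi>" and f: "f \<in> borel_measurable lebesgue" and V: "0 < measure lebesgue B"
    and fatou: "\<And>G. G \<in> borel_measurable lebesgue \<Longrightarrow>
      (\<integral>\<^sup>+ x \<in> B. G (L x) \<partial>lebesgue) \<le> liminf (\<lambda>k. \<integral>\<^sup>+ x \<in> B. G (\<phi> k x) \<partial>lebesgue)"
    and bound: "\<And>k. orlicz_ball_norm \<Phi> (\<lambda>x. f (\<phi> k x)) B \<le> C"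
  shows "orlicz_ball_norm \<Phi> (\<lambda>x. f (L x)) B \<le> C"
proof (rule dense_ge)
  fix y
  assume less: "C < y"
  show "orlicz_ball_norm \<Phi> (\<lambda>x. f (L x)) B \<le> y"
  proof (cases y)
    case (real l)
    have l: "0 < l" using less real by (metis ennreal_less_zero_iff le_less_trans zero_le)
    define G where "G x = ennreal (\<Phi> (\<bar>f x\<bar> / l))" for x
    have G: "G \<in> borel_measurable lebesgue"
      using borel_measurable_young_function_comp[OF Y f l] unfolding G_def by measurable
    have "(\<integral>\<^sup>+ x \<in> B. G (\<phi> k x) \<partial>lebesgue) \<le> measure lebesgue B" for k
      unfolding G_def using bound[of k] less real
      by (intro orlicz_ball_norm_lessD[OF Y V]) auto
    then have "liminf (\<lambda>k. \<integral>\<^sup>+ x \<in> B. G (\<phi> k x) \<partial>lebesgue) \<le> liminf (\<lambda>k. ennreal (measure lebesgue B))"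
      by (intro Liminf_mono always_eventually allI)
    then have "(\<integral>\<^sup>+ x \<in> B. G (L x) \<partial>lebesgue) \<le> measure lebesgue B"
      using fatou[OF G] by (simp add: Liminf_const)
    then show ?thesis
      unfolding real G_def by (rule orlicz_ball_norm_leI[OF l V])
  qed simp
qed

section \<open>Blow-ups of a diffeomorphism\<close>

definition blowup :: "('a::real_normed_vector \<Rightarrow> 'b::real_normed_vector) \<Rightarrow> 'a \<Rightarrow> real \<Rightarrow> 'a \<Rightarrow> 'b" where
  "blowup \<psi> x0 t z = (1 / t) *\<^sub>R (\<psi> (x0 + t *\<^sub>R z) - \<psi> x0)"

lemma blowup_tendsto_derivative:
  assumes \<psi>: "(\<psi> has_derivative L) (at x0)"
  shows "((\<lambda>t. blowup \<psi> x0 t z) \<longlongrightarrow> L z) (at 0)"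
proof -
  have L: "linear L" using \<psi> by (rule has_derivative_linear)
  have "((\<psi> \<circ> (\<lambda>t. x0 + t *\<^sub>R z)) has_derivative (L \<circ> (\<lambda>t. t *\<^sub>R z))) (at 0)"
    by (rule diff_chain_at) (auto intro!: derivative_eq_intros simp: \<psi>)
  then have "((\<lambda>t. norm (\<psi> (x0 + t *\<^sub>R z) - \<psi> x0 - t *\<^sub>R L z) / norm t) \<longlongrightarrow> 0) (at 0)"
    using L by (simp add: has_derivative_iff_norm o_def linear_scale)
  moreover have "norm (blowup \<psi> x0 t z - L z) = norm (\<psi> (x0 + t *\<^sub>R z) - \<psi> x0 - t *\<^sub>R L z) / norm t"
    if "t \<noteq> 0" for t
  proof -
    have "blowup \<psi> x0 t z - L z = (1 / t) *\<^sub>R (\<psi> (x0 + t *\<^sub>R z) - \<psi> x0 - t *\<^sub>R L z)"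
      using that by (simp add: blowup_def algebra_simps)
    then show ?thesis by (simp add: divide_inverse mult.commute)
  qed
  then have "eventually (\<lambda>t. norm (\<psi> (x0 + t *\<^sub>R z) - \<psi> x0 - t *\<^sub>R L z) / norm t
      = norm (blowup \<psi> x0 t z - L z)) (at 0)"
    unfolding eventually_at_filter by (intro always_eventually) auto
  ultimately have "((\<lambda>t. norm (blowup \<psi> x0 t z - L z)) \<longlongrightarrow> 0) (at 0)"
    by (rule Lim_transform_eventually)
  then show ?thesis by (simp add: tendsto_norm_zero_iff LIM_zero_iff)
qed

lemma measurable_lebesgue_if_differentiable_inverse:
  fixes g :: "'a::euclidean_space \<Rightarrow> 'a"
  assumes inverse: "\<And>x. h (g x) = x" "\<And>y. g (h y) = y" and h: "\<And>y. h differentiable at y"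
  shows "g \<in> lebesgue \<rightarrow>\<^sub>M lebesgue"
proof (rule measurableI)
  fix S :: "'a set"
  assume S: "S \<in> sets lebesgue"
  have "g -` S \<inter> space lebesgue = h ` S"
    using inverse by (auto simp: image_iff) (metis inverse(1))
  moreover have "h ` S \<in> sets lebesgue"
    using S h by (intro differentiable_image_in_sets_lebesgue) (auto simp: differentiable_at_imp_differentiable_on)
  ultimately show "g -` S \<inter> space lebesgue \<in> sets lebesgue" by simp
qed auto

lemma diffeomorphism_measurable:
  assumes "diffeomorphism \<psi>"
  shows "\<psi> \<in> lebesgue \<rightarrow>\<^sub>M lebesgue"
  using assms unfolding diffeomorphism_def
  by (intro measurable_lebesgue_if_differentiable_inverse[where h="inv \<psi>"])
     (auto simp: bij_is_inj bij_is_surj surj_f_inv_f)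

lemma blowup_measurable:
  fixes \<psi> :: "'a::euclidean_space \<Rightarrow> 'a"
  assumes \<psi>: "diffeomorphism \<psi>" and t: "t \<noteq> 0"
  shows "blowup \<psi> x0 t \<in> lebesgue \<rightarrow>\<^sub>M lebesgue"
proof -
  have "blowup \<psi> x0 t = (\<lambda>w. - ((1 / t) *\<^sub>R \<psi> x0) + (1 / t) *\<^sub>R w) \<circ> \<psi> \<circ> (\<lambda>z. x0 + t *\<^sub>R z)"
    by (auto simp: blowup_def algebra_simps)
  also have "\<dots> \<in> lebesgue \<rightarrow>\<^sub>M lebesgue"
    using t by (intro measurable_comp[OF lebesgue_affine_scaleR_measurable
        measurable_comp[OF diffeomorphism_measurable[OF \<psi>] lebesgue_affine_scaleR_measurable]]) auto
  finally show ?thesis .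
qed

lemma derivative_measurable_if_diffeomorphism:
  fixes \<psi> :: "'a::euclidean_space \<Rightarrow> 'a"
  assumes \<psi>: "diffeomorphism \<psi>" and L: "(\<psi> has_derivative L) (at x0)"
  shows "L \<in> lebesgue \<rightarrow>\<^sub>M lebesgue"
proof -
  define D where "D = frechet_derivative (inv \<psi>) (at (\<psi> x0))"
  have bij: "bij \<psi>" using \<psi> by (simp add: diffeomorphism_def)
  have D: "(inv \<psi> has_derivative D) (at (\<psi> x0))"
    using \<psi> unfolding D_def diffeomorphism_def frechet_derivative_works by blast
  have "((\<psi> \<circ> inv \<psi>) has_derivative (L \<circ> D)) (at (\<psi> x0))"
    using bij by (intro diff_chain_at[OF D]) (simp add: bij_is_inj L)
  moreover have "((\<psi> \<circ> inv \<psi>) has_derivative id) (at (\<psi> x0))"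
    using bij by (simp add: o_def bij_is_surj surj_f_inv_f has_derivative_ident id_def)
  ultimately have "L \<circ> D = id" by (rule has_derivative_unique)
  then have LD: "L (D y) = y" for y by (metis comp_apply id_apply)
  then have "inj L"
    using has_derivative_linear[OF L] by (metis linear_surj_imp_inj surjI)
  then have DL: "D (L z) = z" for z using LD by (metis injD)
  show ?thesis
    using has_derivative_bounded_linear[OF D]
    by (intro measurable_lebesgue_if_differentiable_inverse[where h=D] DL LD bounded_linear_imp_differentiable)
qed

section \<open>Bounded composition operators\<close>

locale morrey_orlicz_composition =
  fixes \<Phi> :: "real \<Rightarrow> real" and p :: real and \<psi> :: "'a::euclidean_space \<Rightarrow> 'a" and K c :: real
  assumes p: "1 \<le> p" and young: "young_function \<Phi>"
    and c: "1 \<le> c" and growth: "\<And>t. 1 \<le> t \<Longrightarrow> \<Phi> t \<le> c * t powr p"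
    and diffeo: "diffeomorphism \<psi>" and K: "0 < K"
    and closed: "\<And>f. f \<in> morrey_orlicz_space \<Phi> p \<Longrightarrow> f \<circ> \<psi> \<in> morrey_orlicz_space \<Phi> p"
    and bounded: "\<And>f. f \<in> morrey_orlicz_space \<Phi> p \<Longrightarrow>
      morrey_orlicz_norm \<Phi> p (f \<circ> \<psi>) \<le> ennreal K * morrey_orlicz_norm \<Phi> p f"
begin

lemma blowup_bound:
  assumes f: "f \<in> morrey_orlicz_space \<Phi> p" and t: "0 < t" and r: "0 < r"
  shows "ennreal (measure lebesgue (ball a r) powr (1 / p))
           * orlicz_ball_norm \<Phi> (\<lambda>z. f (blowup \<psi> x0 t z)) (ball a r)
         \<le> ennreal K * morrey_orlicz_norm \<Phi> p f"
proof -
  \<comment> \<open>\<open>f\<close> is \<open>h\<close> seen at scale \<open>t\<close> around \<open>\<psi> x0\<close>, and \<open>f \<circ> blowup \<psi> x0 t\<close> is \<open>h \<circ> \<psi>\<close> seen at scale \<open>t\<close> around \<open>x0\<close>\<close>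
  define h where "h y = f ((1 / t) *\<^sub>R (y - \<psi> x0))" for y
  define \<tau> where "\<tau> = (t ^ DIM('a)) powr (1 / p)"
  have fm: "f \<in> borel_measurable lebesgue" and fN: "morrey_orlicz_norm \<Phi> p f < \<infinity>"
    using f by (simp_all add: morrey_orlicz_space_def)
  have "(\<lambda>y. - ((1 / t) *\<^sub>R \<psi> x0) + (1 / t) *\<^sub>R y) \<in> lebesgue \<rightarrow>\<^sub>M lebesgue"
    using t by (intro lebesgue_affine_scaleR_measurable) simp
  moreover have "h = f \<circ> (\<lambda>y. - ((1 / t) *\<^sub>R \<psi> x0) + (1 / t) *\<^sub>R y)"
    by (auto simp: h_def algebra_simps)
  ultimately have hm: "h \<in> borel_measurable lebesgue"
    using measurable_comp fm by metis
  have "(\<lambda>z. h (\<psi> x0 + t *\<^sub>R z)) = f" using t by (simp add: h_def)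
  then have hN: "morrey_orlicz_norm \<Phi> p h \<le> ennreal \<tau> * morrey_orlicz_norm \<Phi> p f"
    using morrey_orlicz_norm_le_affine[OF young t hm, of p "\<psi> x0"] by (simp add: \<tau>_def)
  then have "morrey_orlicz_norm \<Phi> p h < \<infinity>"
    using fN by (simp add: ennreal_mult_less_top le_less_trans)
  then have h: "h \<in> morrey_orlicz_space \<Phi> p" using hm by (simp add: morrey_orlicz_space_def)
  have h\<psi>: "h \<circ> \<psi> \<in> borel_measurable lebesgue"
    using closed[OF h] by (simp add: morrey_orlicz_space_def)
  have "(\<lambda>z. (h \<circ> \<psi>) (x0 + t *\<^sub>R z)) = (\<lambda>z. f (blowup \<psi> x0 t z))"
    by (simp add: h_def blowup_def)
  then have "ennreal \<tau> * (ennreal (measure lebesgue (ball a r) powr (1 / p))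
           * orlicz_ball_norm \<Phi> (\<lambda>z. f (blowup \<psi> x0 t z)) (ball a r))
      = ennreal (measure lebesgue (ball (x0 + t *\<^sub>R a) (t * r)) powr (1 / p))
           * orlicz_ball_norm \<Phi> (h \<circ> \<psi>) (ball (x0 + t *\<^sub>R a) (t * r))"
    using morrey_ball_term_affine[OF young t r h\<psi>, of x0 a p] by (simp add: \<tau>_def)
  also have "\<dots> \<le> morrey_orlicz_norm \<Phi> p (h \<circ> \<psi>)"
    using t r by (intro morrey_orlicz_norm_upper) simp
  also have "\<dots> \<le> ennreal K * morrey_orlicz_norm \<Phi> p h"
    by (rule bounded[OF h])
  also have "\<dots> \<le> ennreal \<tau> * (ennreal K * morrey_orlicz_norm \<Phi> p f)"
    using hN by (simp add: mult_left_mono mult.left_commute)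
  finally show ?thesis
    using t by (simp add: \<tau>_def ennreal_mult_le_mult_iff)
qed

lemma blowup_indicator_bound:
  assumes E: "E \<in> sets lebesgue" and fin: "emeasure lebesgue E < \<infinity>" and t: "0 < t" and r: "0 < r"
  shows "ennreal (measure lebesgue (ball a r) powr (1 / p))
           * orlicz_ball_norm \<Phi> (indicator (blowup \<psi> x0 t -` E)) (ball a r)
         \<le> ennreal (K * c * measure lebesgue E powr (1 / p))"
proof -
  have E_norm: "morrey_orlicz_norm \<Phi> p (indicator E) \<le> ennreal (c * measure lebesgue E powr (1 / p))"
    by (rule morrey_orlicz_norm_indicator_le[OF p young c _ E fin]) (rule growth)
  then have "indicator E \<in> morrey_orlicz_space \<Phi> p"
    using E by (auto simp: morrey_orlicz_space_def intro: le_less_trans)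
  from blowup_bound[OF this t r, of a x0]
  have "ennreal (measure lebesgue (ball a r) powr (1 / p))
           * orlicz_ball_norm \<Phi> (indicator (blowup \<psi> x0 t -` E)) (ball a r)
         \<le> ennreal K * morrey_orlicz_norm \<Phi> p (indicator E)"
    by (simp add: indicator_vimage[abs_def])
  also have "\<dots> \<le> ennreal K * ennreal (c * measure lebesgue E powr (1 / p))"
    using E_norm by (rule mult_left_mono) simp
  finally show ?thesis using K by (simp add: ennreal_mult' mult.assoc)
qed

lemma blowup_vimage_small:
  assumes r: "0 < r" and e: "0 < e"
  obtains d where "0 < d" and "\<And>(E :: 'a set) t. E \<in> sets lebesgue \<Longrightarrow> emeasure lebesgue E < ennreal d \<Longrightarrow>
    0 < t \<Longrightarrow> emeasure lebesgue (blowup \<psi> x0 t -` E \<inter> ball a r) \<le> ennreal e"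
proof -
  define V where "V = measure lebesgue (ball a r)"
  have V: "0 < V" unfolding V_def by (rule measure_lebesgue_ball_pos[OF r])
  obtain s where s: "0 < s" "V / e \<le> \<Phi> s" by (rule young_function_unbounded[OF young])
  have \<Phi>s: "0 < \<Phi> s" using s(2) V e by (meson divide_pos_pos less_le_trans)
  \<comment> \<open>chosen so that sets of measure below \<open>d\<close> have preimages with \<open>\<parallel>\<chi>\<^sub>F\<parallel>\<^bsub>\<Phi>,B\<^esub> < 1/s\<close>\<close>
  define d where "d = (V powr (1 / p) / (K * c * s)) powr p"
  have d: "0 < d" using V s K c by (simp add: d_def)
  show ?thesis
  proof (rule that[OF d])
    fix E :: "'a set" and t :: real
    assume E: "E \<in> sets lebesgue" and small: "emeasure lebesgue E < ennreal d" and t: "0 < t"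
    define F where "F = blowup \<psi> x0 t -` E"
    have F: "F \<in> sets lebesgue"
      unfolding F_def using measurable_sets[OF blowup_measurable[OF diffeo] E] t by simp
    have fin: "emeasure lebesgue E < \<infinity>"
      using small by (metis ennreal_less_top infinity_ennreal_def order.strict_trans)
    then have "measure lebesgue E < d"
      using small by (simp add: emeasure_eq_ennreal_measure ennreal_less_iff)
    then have "measure lebesgue E powr (1 / p) < d powr (1 / p)"
      using p d by (cases "measure lebesgue E = 0") (auto intro: powr_less_mono2)
    then have lt: "K * c * measure lebesgue E powr (1 / p) / V powr (1 / p) < 1 / s"
      using p s K c V by (simp add: d_def powr_powr field_simps)
    have "orlicz_ball_norm \<Phi> (indicator F) (ball a r)
        \<le> ennreal (K * c * measure lebesgue E powr (1 / p)) / ennreal (V powr (1 / p))"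
      using blowup_indicator_bound[OF E fin t r, of a x0] V
      by (simp add: F_def V_def ennreal_mult_le_iff_le_divide)
    also have "\<dots> = ennreal (K * c * measure lebesgue E powr (1 / p) / V powr (1 / p))"
      using K c V by (intro divide_ennreal) auto
    also have "\<dots> < ennreal (1 / s)"
      using lt s by (intro ennreal_lessI) auto
    finally have "orlicz_ball_norm \<Phi> (indicator F) (ball a r) < ennreal (1 / s)" .
    from orlicz_ball_norm_indicator_lessD[OF young F _ _ this]
    have "\<Phi> s * measure lebesgue (F \<inter> ball a r) \<le> \<Phi> s * e"
      using V s(2) e by (simp add: V_def field_simps)
    then have "measure lebesgue (F \<inter> ball a r) \<le> e"
      using \<Phi>s by (simp add: mult_le_cancel_left_pos)
    moreover have "F \<inter> ball a r \<in> lmeasurable"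
      using fmeasurable_Int_fmeasurable[OF lmeasurable_ball F] by (simp add: Int_commute)
    ultimately show "emeasure lebesgue (blowup \<psi> x0 t -` E \<inter> ball a r) \<le> ennreal e"
      by (simp add: F_def emeasure_eq_measure2 ennreal_leI)
  qed
qed

lemma morrey_orlicz_norm_comp_derivative_le:
  assumes L: "(\<psi> has_derivative L) (at x0)" and f: "f \<in> morrey_orlicz_space \<Phi> p"
  shows "morrey_orlicz_norm \<Phi> p (\<lambda>x. f (L x)) \<le> ennreal K * morrey_orlicz_norm \<Phi> p f"
proof (rule morrey_orlicz_norm_least)
  fix a :: 'a and r :: real
  assume r: "0 < r"
  define \<phi> where "\<phi> k = blowup \<psi> x0 (inverse (Suc k))" for k
  define Vp where "Vp = measure lebesgue (ball a r) powr (1 / p)"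
  have Vp: "0 < Vp" using measure_lebesgue_ball_pos[OF r] by (simp add: Vp_def)
  have "filterlim (\<lambda>k. inverse (real (Suc k))) (at 0) sequentially"
    using LIMSEQ_inverse_real_of_nat by (intro filterlim_atI) auto
  then have conv: "(\<lambda>k. \<phi> k x) \<longlonglongrightarrow> L x" for x
    unfolding \<phi>_def by (rule filterlim_compose[OF blowup_tendsto_derivative[OF L]])
  have small: "\<exists>d>0. \<forall>E\<in>sets lebesgue. emeasure lebesgue E < ennreal d \<longrightarrow>
      (\<forall>k. emeasure lebesgue (\<phi> k -` E \<inter> ball a r) \<le> ennreal e)" if "0 < e" for e
    using blowup_vimage_small[OF r that, of x0] unfolding \<phi>_def
    by (metis of_nat_0_less_iff inverse_positive_iff_positive zero_less_Suc)
  have "orlicz_ball_norm \<Phi> (\<lambda>x. f (L x)) (ball a r) \<le> ennreal K * morrey_orlicz_norm \<Phi> p f / ennreal Vp"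
  proof (rule orlicz_ball_norm_comp_le_if_liminf[where f=f and L=L and \<phi>=\<phi>, OF young _ measure_lebesgue_ball_pos[OF r]])
    show "f \<in> borel_measurable lebesgue" using f by (simp add: morrey_orlicz_space_def)
    show "(\<integral>\<^sup>+ x \<in> ball a r. G (L x) \<partial>lebesgue) \<le> liminf (\<lambda>k. \<integral>\<^sup>+ x \<in> ball a r. G (\<phi> k x) \<partial>lebesgue)"
      if "G \<in> borel_measurable lebesgue" for G
      using derivative_measurable_if_diffeomorphism[OF diffeo L] blowup_measurable[OF diffeo] conv small that
      by (intro set_nn_integral_comp_le_liminf) (auto simp: \<phi>_def)
    show "orlicz_ball_norm \<Phi> (\<lambda>x. f (\<phi> k x)) (ball a r) \<le> ennreal K * morrey_orlicz_norm \<Phi> p f / ennreal Vp" for k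
      using blowup_bound[OF f _ r, of "inverse (Suc k)" a x0] Vp
      by (simp add: \<phi>_def Vp_def ennreal_mult_le_iff_le_divide)
  qed
  then show "ennreal (measure lebesgue (ball a r) powr (1 / p)) * orlicz_ball_norm \<Phi> (\<lambda>x. f (L x)) (ball a r)
      \<le> ennreal K * morrey_orlicz_norm \<Phi> p f"
    using Vp by (simp add: Vp_def ennreal_mult_le_iff_le_divide)
qed

end

theorem corollary4p4:
  fixes \<Phi> :: "real \<Rightarrow> real" and p :: real and \<psi> :: "real^'n \<Rightarrow> real^'n"
  assumes "p \<ge> 1"
    and "young_function \<Phi>"
    and "\<exists>c>0. \<forall>t\<ge>1. \<Phi> t \<le> c * t powr p"
    and "diffeomorphism \<psi>"
    and "bounded_composition_morrey_orlicz \<Phi> p \<psi>"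
  shows "\<exists>C>0. \<forall>x0. \<forall>f \<in> morrey_orlicz_space \<Phi> p.
           morrey_orlicz_norm \<Phi> p (\<lambda>x. f (jacobian \<psi> (at x0) *v x))
             \<le> ennreal C * morrey_orlicz_norm \<Phi> p f"
proof -
  obtain c0 where c0: "\<And>t. 1 \<le> t \<Longrightarrow> \<Phi> t \<le> c0 * t powr p"
    using assms(3) by blast
  have growth: "\<Phi> t \<le> max c0 1 * t powr p" if "1 \<le> t" for t
    using c0[OF that] by (meson max.cobounded1 mult_right_mono order_trans powr_ge_zero)
  obtain K where "0 < K"
    and "\<And>f. f \<in> morrey_orlicz_space \<Phi> p \<Longrightarrow> f \<circ> \<psi> \<in> morrey_orlicz_space \<Phi> p"
    and "\<And>f. f \<in> morrey_orlicz_space \<Phi> p \<Longrightarrow>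
      morrey_orlicz_norm \<Phi> p (f \<circ> \<psi>) \<le> ennreal K * morrey_orlicz_norm \<Phi> p f"
    using assms(5) unfolding bounded_composition_morrey_orlicz_def by blast
  then interpret morrey_orlicz_composition \<Phi> p \<psi> K "max c0 1"
    using assms(1,2,4) growth by unfold_locales auto
  have "(\<psi> has_derivative (\<lambda>x. jacobian \<psi> (at x0) *v x)) (at x0)" for x0
    using assms(4) by (simp add: diffeomorphism_def flip: jacobian_works)
  then show ?thesis
    using \<open>0 < K\<close> morrey_orlicz_norm_comp_derivative_le by blast
qed

end
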